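(* Let $b_1,\dots,b_n$ be nonnegative integers with $\sum_{i=1}^n b_i\ge n-1$. Then for every Nash equilibrium of $(b_1,\dots,b_n)$-BG, in either the MAX or the SUM version, the underlying graph $U(G)$ of its realization $G$ is connected.
   Context: Bounded budget network creation game $(b_1,\dots,b_n)$-BG: $n$ players with integer budgets $0\le b_i\le n-1$. A strategy of player $i$ is a set $S_i\subseteq\{1,\dots,n\}\setminus\{i\}$ with $|S_i|=b_i$; a profile is realized by the directed graph $G$ on $u_1,\dots,u_n$ with an arc $\overrightarrow{u_iu_j}$ iff $j\in S_i$. $U(G)$ is the undirected multigraph obtained by ignoring directions. $\operatorname{dist}(u,v)$ is the distance in $U(G)$, defined as $n^2$ between different components. SUM cost: $c_{SUM}(u)=\sum_v\operatorname{dist}(u,v)$; MAX cost: $c_{MAX}(u)=\max_v\operatorname{dist}(u,v)+(\kappa-1)n^2$, $\kappa$ the number of components of $U(G)$. A Nash equilibrium (in a version) is a profile in which no player can decrease its cost (of that version) by changing its own strategy while the others are fixed. *)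

theory Defs
  imports Main
begin

text \<open>Players are 0,...,n-1 (vertex u_i is i). A profile is S :: nat => nat set,
 budgets b :: nat => nat.\<close>

definition valid_strategy :: "nat \<Rightarrow> (nat \<Rightarrow> nat) \<Rightarrow> nat \<Rightarrow> nat set \<Rightarrow> bool" where
  "valid_strategy n b i T \<longleftrightarrow> T \<subseteq> {0..<n} - {i} \<and> card T = b i"

definition is_profile :: "nat \<Rightarrow> (nat \<Rightarrow> nat) \<Rightarrow> (nat \<Rightarrow> nat set) \<Rightarrow> bool" where
  "is_profile n b S \<longleftrightarrow> (\<forall>i<n. valid_strategy n b i (S i))"

definition uadj :: "nat \<Rightarrow> (nat \<Rightarrow> nat set) \<Rightarrow> nat \<Rightarrow> nat \<Rightarrow> bool" where
  "uadj n S u v \<longleftrightarrow> u < n \<and> v < n \<and> (v \<in> S u \<or> u \<in> S v)"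

definition reach :: "nat \<Rightarrow> (nat \<Rightarrow> nat set) \<Rightarrow> nat \<Rightarrow> nat \<Rightarrow> bool" where
  "reach n S u v \<longleftrightarrow> (\<exists>k. (uadj n S ^^ k) u v)"

definition gdist :: "nat \<Rightarrow> (nat \<Rightarrow> nat set) \<Rightarrow> nat \<Rightarrow> nat \<Rightarrow> nat" where
  "gdist n S u v = (if reach n S u v then (LEAST k. (uadj n S ^^ k) u v) else n^2)"

definition num_components :: "nat \<Rightarrow> (nat \<Rightarrow> nat set) \<Rightarrow> nat" where
  "num_components n S = card ((\<lambda>u. {v. v < n \<and> reach n S u v}) ` {0..<n})"

definition cost_sum :: "nat \<Rightarrow> (nat \<Rightarrow> nat set) \<Rightarrow> nat \<Rightarrow> nat" where
  "cost_sum n S u = (\<Sum>v<n. gdist n S u v)"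

definition cost_max :: "nat \<Rightarrow> (nat \<Rightarrow> nat set) \<Rightarrow> nat \<Rightarrow> nat" where
  "cost_max n S u = Max (gdist n S u ` {0..<n}) + (num_components n S - 1) * n^2"

definition nash_eq :: "(nat \<Rightarrow> (nat \<Rightarrow> nat set) \<Rightarrow> nat \<Rightarrow> nat) \<Rightarrow> nat \<Rightarrow> (nat \<Rightarrow> nat)
   \<Rightarrow> (nat \<Rightarrow> nat set) \<Rightarrow> bool" where
  "nash_eq c n b S \<longleftrightarrow> is_profile n b S \<and>
     (\<forall>i<n. \<forall>T. valid_strategy n b i T \<longrightarrow> c n S i \<le> c n (S(i := T)) i)"

definition ug_connected :: "nat \<Rightarrow> (nat \<Rightarrow> nat set) \<Rightarrow> bool" where
  "ug_connected n S \<longleftrightarrow> (\<forall>u<n. \<forall>v<n. reach n S u v)"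

end

theory Submission
  imports Defs "HOL-Library.Transitive_Closure_Table"
begin

text \<open>
A graph on n vertices in which every edge is a bridge has at most n - \<kappa> edges, \<kappa> being the
number of components. So if U(G) is disconnected (\<kappa> \<ge> 2) while it has at least n - 1 edges,
some arc (i,j) lies on a cycle. Player i may redirect it to a vertex w outside its component:
i and j remain joined around the cycle, so no pair gets disconnected, while w moves from
distance n^2 to distance at most n - 1. In the MAX version the number of components drops,
which saves n^2; in the SUM version the other n - 1 distances each grow by at most n - 1,
and (n - 1)^2 + (n - 1) < n^2. Either way i strictly improves, so G is no equilibrium.
\<close>

definition arc_adj :: "nat \<Rightarrow> (nat \<times> nat) set \<Rightarrow> nat \<Rightarrow> nat \<Rightarrow> bool" where
  "arc_adj n A u v \<longleftrightarrow> u < n \<and> v < n \<and> ((u, v) \<in> A \<or> (v, u) \<in> A)"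

definition components :: "nat \<Rightarrow> (nat \<Rightarrow> nat \<Rightarrow> bool) \<Rightarrow> nat set set" where
  "components n R = (\<lambda>u. {v. v < n \<and> R\<^sup>*\<^sup>* u v}) ` {0..<n}"

definition forest :: "nat \<Rightarrow> (nat \<times> nat) set \<Rightarrow> bool" where
  "forest n A \<longleftrightarrow> (\<forall>(i, j) \<in> A. \<not> (arc_adj n (A - {(i, j)}))\<^sup>*\<^sup>* i j)"

lemma symp_arc_adj: "symp (arc_adj n A)"
  by (auto simp: symp_def arc_adj_def)

lemma rtranclp_arc_adj_mono: "A \<subseteq> B \<Longrightarrow> (arc_adj n A)\<^sup>*\<^sup>* \<le> (arc_adj n B)\<^sup>*\<^sup>*"
  by (rule rtranclp_mono) (auto simp: arc_adj_def)

lemma card_components_less: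
  assumes mono: "R\<^sup>*\<^sup>* \<le> R'\<^sup>*\<^sup>*" and "symp R'"
    and "a < n" "b < n" "R'\<^sup>*\<^sup>* a b" "\<not> R\<^sup>*\<^sup>* a b"
  shows "card (components n R') < card (components n R)"
proof -
  define comp where "comp Q u = {v. v < n \<and> Q\<^sup>*\<^sup>* u v}" for Q u
  define F where "F X = {v. v < n \<and> (\<exists>x\<in>X. R'\<^sup>*\<^sup>* x v)}" for X
  have F_comp: "F (comp R u) = comp R' u" if "u < n" for u
    using that mono by (auto simp: F_def comp_def intro: rtranclp_trans)
  have fin: "finite (components n R)"
    by (simp add: components_def)
  have "components n R' = F ` components n R"
    using F_comp by (auto simp: components_def comp_def[symmetric] image_image)
  moreover have "\<not> inj_on F (components n R)"
  proof
    assume "inj_on F (components n R)"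
    moreover have "comp R a \<in> components n R" "comp R b \<in> components n R"
      using assms(3,4) by (auto simp: components_def comp_def)
    moreover have "comp R' a = comp R' b"
      using assms(5) symp_rtranclp[OF \<open>symp R'\<close>]
      by (auto simp: comp_def intro: rtranclp_trans dest: sympD)
    ultimately have "comp R a = comp R b"
      using F_comp assms(3,4) by (metis inj_onD)
    then show False
      using assms(4,6) by (auto simp: comp_def)
  qed
  ultimately show ?thesis
    using fin card_image_le[OF fin] inj_on_iff_eq_card[OF fin] by (metis le_neq_implies_less)
qed

lemma card_components_empty: "card (components n (arc_adj n {})) = n"
proof -
  have "(arc_adj n {})\<^sup>*\<^sup>* u v \<longleftrightarrow> u = v" for u v
    by (auto elim: rtranclp_induct simp: arc_adj_def)
  then have "components n (arc_adj n {}) = (\<lambda>u. {u}) ` {0..<n}"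
    by (auto simp: components_def)
  then show ?thesis
    by (simp add: card_image)
qed

lemma forest_insertD:
  assumes "forest n (insert x A)"
  shows "forest n A"
  unfolding forest_def
proof clarify
  fix i j
  assume "(i, j) \<in> A" "(arc_adj n (A - {(i, j)}))\<^sup>*\<^sup>* i j"
  moreover have "A - {(i, j)} \<subseteq> insert x A - {(i, j)}"
    by blast
  ultimately have "(arc_adj n (insert x A - {(i, j)}))\<^sup>*\<^sup>* i j"
    using rtranclp_arc_adj_mono by (blast dest: predicate2D)
  then show False
    using assms \<open>(i, j) \<in> A\<close> by (auto simp: forest_def)
qed

lemma forest_card_le:
  "finite A \<Longrightarrow> A \<subseteq> {0..<n} \<times> {0..<n} \<Longrightarrow> forest n A \<Longrightarrow>
   card A + card (components n (arc_adj n A)) \<le> n"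
proof (induction A rule: finite_induct)
  case empty
  then show ?case
    by (simp add: card_components_empty)
next
  case (insert x A)
  obtain i j where x: "x = (i, j)"
    by fastforce
  have "\<not> (arc_adj n (insert x A - {x}))\<^sup>*\<^sup>* i j"
    using insert.prems(2) x by (simp add: forest_def)
  then have "\<not> (arc_adj n A)\<^sup>*\<^sup>* i j"
    using insert.hyps(2) by (simp add: Diff_insert_absorb)
  moreover have "i < n" "j < n"
    using insert.prems(1) x by auto
  moreover have "(arc_adj n (insert x A))\<^sup>*\<^sup>* i j"
    using calculation(2,3) x by (auto simp: arc_adj_def)
  ultimately have "card (components n (arc_adj n (insert x A))) < card (components n (arc_adj n A))"
    by (intro card_components_less[OF rtranclp_arc_adj_mono[OF subset_insertI] symp_arc_adj])
  moreover have "card A + card (components n (arc_adj n A)) \<le> n"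
    using insert.IH insert.prems(1) forest_insertD[OF insert.prems(2)] by blast
  ultimately show ?case
    using insert.hyps by simp
qed

lemma rtrancl_path_relpowp: "rtrancl_path R u xs v \<Longrightarrow> (R ^^ length xs) u v"
proof (induction rule: rtrancl_path.induct)
  case (step x y ys z)
  have "(R ^^ Suc (length ys)) x z"
    by (rule relpowp_Suc_I2[OF step(1,3)])
  then show ?case
    by simp
qed simp

text \<open>A path can be shortened to a simple one, which visits at most n vertices.\<close>

lemma rtranclp_relpowp_le:
  assumes "\<And>x y. R x y \<Longrightarrow> y < n" "u < n" "R\<^sup>*\<^sup>* u v"
  shows "\<exists>k \<le> n - 1. (R ^^ k) u v"
proof -
  obtain xs where "rtrancl_path R u xs v"
    using assms(3) rtranclp_eq_rtrancl_path by metis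
  then obtain xs' where path: "rtrancl_path R u xs' v" and dist: "distinct (u # xs')"
    using rtrancl_path_distinct by metis
  have "z < n" if z: "z \<in> set xs'" for z
  proof -
    obtain x where "R x z"
      using rtrancl_path_Range[OF path z] by (rule RangepE)
    then show ?thesis
      by (rule assms(1))
  qed
  then have "set (u # xs') \<subseteq> {..<n}"
    using assms(2) by auto
  then have "card (set (u # xs')) \<le> n"
    by (metis card_lessThan card_mono finite_lessThan)
  then have "length (u # xs') \<le> n"
    by (simp only: distinct_card[OF dist])
  then show ?thesis
    using rtrancl_path_relpowp[OF path] by (intro exI[of _ "length xs'"]) simp
qed

lemma uadj_eq_arc_adj: "uadj n S = arc_adj n (Sigma {..<n} S)"
  by (auto simp: fun_eq_iff uadj_def arc_adj_def)

lemma symp_uadj: "symp (uadj n S)"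
  by (auto simp: symp_def uadj_def)

lemma reach_iff_rtranclp: "reach n S u v \<longleftrightarrow> (uadj n S)\<^sup>*\<^sup>* u v"
  by (simp add: reach_def rtranclp_power)

lemma reach_sym: "reach n S u v \<Longrightarrow> reach n S v u"
  using symp_rtranclp[OF symp_uadj] by (auto simp: reach_iff_rtranclp dest: sympD)

lemma reach_trans: "reach n S u v \<Longrightarrow> reach n S v w \<Longrightarrow> reach n S u w"
  by (auto simp: reach_iff_rtranclp)

lemma num_components_eq_card_components: "num_components n S = card (components n (uadj n S))"
  by (simp add: num_components_def components_def reach_iff_rtranclp)

lemma gdist_le_of_reach:
  assumes "u < n" "reach n S u v"
  shows "gdist n S u v \<le> n - 1"
proof -
  obtain k where "k \<le> n - 1" "(uadj n S ^^ k) u v"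
    using rtranclp_relpowp_le[of "uadj n S" n u v] assms by (auto simp: uadj_def reach_iff_rtranclp)
  then show ?thesis
    using assms(2) Least_le[of "\<lambda>k. (uadj n S ^^ k) u v" k] by (simp add: gdist_def)
qed

lemma gdist_le_square:
  assumes "u < n"
  shows "gdist n S u v \<le> n\<^sup>2"
proof (cases "reach n S u v")
  case True
  then have "gdist n S u v \<le> n - 1"
    using gdist_le_of_reach[OF assms] by blast
  also have "\<dots> \<le> n\<^sup>2"
    by (cases n) (auto simp: power2_eq_square)
  finally show ?thesis .
next
  case False
  then show ?thesis
    by (simp add: gdist_def)
qed

lemma cost_max_less:
  assumes mono: "\<And>x y. reach n S x y \<Longrightarrow> reach n S' x y"
    and "i < n" "w < n" "\<not> reach n S i w" "reach n S' i w"
  shows "cost_max n S' i < cost_max n S i"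
proof -
  have "gdist n S i w = n\<^sup>2"
    using assms(4) by (simp add: gdist_def)
  then have max_S: "Max (gdist n S i ` {0..<n}) = n\<^sup>2"
    using assms(3) gdist_le_square[OF \<open>i < n\<close>] by (intro Max_eqI) (auto intro: rev_image_eqI)
  have max_S': "Max (gdist n S' i ` {0..<n}) \<le> n\<^sup>2"
    using gdist_le_square[OF \<open>i < n\<close>] assms(3) by (subst Max_le_iff) auto
  have fewer: "num_components n S' < num_components n S"
    unfolding num_components_eq_card_components
  proof (rule card_components_less[OF _ symp_uadj])
    show "(uadj n S)\<^sup>*\<^sup>* \<le> (uadj n S')\<^sup>*\<^sup>*"
      using mono by (auto simp: reach_iff_rtranclp)
  qed (use assms(2-5) in \<open>auto simp: reach_iff_rtranclp\<close>)
  have "num_components n S' > 0"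
    using assms(2) by (auto simp: num_components_def card_gt_0_iff)
  have "cost_max n S' i \<le> n\<^sup>2 + (num_components n S' - 1) * n\<^sup>2"
    using max_S' by (simp add: cost_max_def)
  also have "\<dots> = num_components n S' * n\<^sup>2"
    using \<open>num_components n S' > 0\<close> by (cases "num_components n S'") auto
  also have "\<dots> \<le> (num_components n S - 1) * n\<^sup>2"
    using fewer by (intro mult_right_mono) auto
  also have "\<dots> < cost_max n S i"
    using assms(2) max_S by (simp add: cost_max_def)
  finally show ?thesis .
qed

lemma cost_sum_less:
  assumes mono: "\<And>x y. reach n S x y \<Longrightarrow> reach n S' x y"
    and "i < n" "w < n" "\<not> reach n S i w" "reach n S' i w"
  shows "cost_sum n S' i < cost_sum n S i"
proof -
  let ?V = "{..<n} - {w}"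
  have card_V: "card ?V = n - 1"
    using assms(3) by simp
  have others: "gdist n S' i x \<le> gdist n S i x + (n - 1)" for x
  proof (cases "reach n S i x")
    case True
    then show ?thesis
      using gdist_le_of_reach[OF \<open>i < n\<close>] mono by fastforce
  next
    case False
    then show ?thesis
      using gdist_le_square[OF \<open>i < n\<close>, of S' x] by (simp add: gdist_def)
  qed
  have "cost_sum n S' i = (\<Sum>x\<in>?V. gdist n S' i x) + gdist n S' i w"
    using assms(3) by (simp add: cost_sum_def sum.remove add.commute)
  also have "\<dots> \<le> (\<Sum>x\<in>?V. gdist n S i x + (n - 1)) + (n - 1)"
    using gdist_le_of_reach[OF assms(2,5)] by (intro add_mono sum_mono others)
  also have "\<dots> = (\<Sum>x\<in>?V. gdist n S i x) + (n - 1) * (n - 1) + (n - 1)"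
    by (simp only: sum.distrib sum_constant card_V) (simp add: mult.commute)
  also have "\<dots> < (\<Sum>x\<in>?V. gdist n S i x) + n\<^sup>2"
    using assms(2) by (cases n) (auto simp: power2_eq_square)
  also have "\<dots> = cost_sum n S i"
    using assms(3,4) by (simp add: cost_sum_def gdist_def sum.remove add.commute)
  finally show ?thesis .
qed

lemma profile_arcs:
  assumes "is_profile n b S"
  shows "finite (Sigma {..<n} S)" "Sigma {..<n} S \<subseteq> {0..<n} \<times> {0..<n}"
    and "card (Sigma {..<n} S) = (\<Sum>i<n. b i)"
proof -
  have S: "S i \<subseteq> {0..<n}" "card (S i) = b i" if "i < n" for i
    using assms that by (auto simp: is_profile_def valid_strategy_def)
  then show "finite (Sigma {..<n} S)" "Sigma {..<n} S \<subseteq> {0..<n} \<times> {0..<n}"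
    by (auto intro: finite_subset)
  have "card (Sigma {..<n} S) = (\<Sum>i<n. card (S i))"
    using S(1) by (subst card_SigmaI) (auto intro: finite_subset)
  also have "\<dots> = (\<Sum>i<n. b i)"
    using S(2) by (intro sum.cong) auto
  finally show "card (Sigma {..<n} S) = (\<Sum>i<n. b i)" .
qed

lemma num_components_ge_2:
  assumes "\<not> ug_connected n S"
  shows "num_components n S \<ge> 2"
proof -
  define C where "C u = {x. x < n \<and> reach n S u x}" for u
  obtain u v where "u < n" "v < n" "\<not> reach n S u v"
    using assms by (auto simp: ug_connected_def)
  then have "C u \<noteq> C v"
    by (auto simp: C_def reach_iff_rtranclp)
  moreover have "card {C u, C v} \<le> num_components n S"
    unfolding num_components_def C_def[symmetric]
    using \<open>u < n\<close> \<open>v < n\<close> by (intro card_mono) auto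
  ultimately show ?thesis
    by simp
qed

text \<open>An arc (i,j) lies on a cycle iff i still reaches j once the arc is deleted.\<close>

lemma cycle_arc_exists:
  assumes "is_profile n b S" "(\<Sum>i<n. b i) \<ge> n - 1" "\<not> ug_connected n S"
  shows "\<exists>i<n. \<exists>j\<in>S i. reach n (S(i := S i - {j})) i j"
proof (rule ccontr)
  assume no_cycle: "\<not> ?thesis"
  have "Sigma {..<n} (S(i := S i - {j})) = Sigma {..<n} S - {(i, j)}" if "i < n" for i j
    using that by (auto split: if_splits)
  then have "forest n (Sigma {..<n} S)"
    using no_cycle by (auto simp: forest_def reach_iff_rtranclp uadj_eq_arc_adj)
  then have "(\<Sum>i<n. b i) + num_components n S \<le> n"
    using forest_card_le[OF profile_arcs(1,2)[OF assms(1)]] profile_arcs(3)[OF assms(1)]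
    by (simp add: num_components_eq_card_components uadj_eq_arc_adj)
  then show False
    using assms(2) num_components_ge_2[OF assms(3)] by linarith
qed

lemma unreachable_exists:
  assumes "\<not> ug_connected n S"
  shows "\<exists>w<n. \<not> reach n S i w"
  using assms reach_sym reach_trans by (meson ug_connected_def)

lemma reach_redirect:
  assumes "i < n" "w < n" "reach n (S(i := S i - {j})) i j"
  shows "reach n S x y \<Longrightarrow> reach n (S(i := insert w (S i - {j}))) x y"
    and "reach n (S(i := insert w (S i - {j}))) i w"
proof -
  let ?S' = "S(i := insert w (S i - {j}))"
  have "uadj n (S(i := S i - {j})) \<le> uadj n ?S'"
    by (auto simp: uadj_def)
  then have weaken: "reach n (S(i := S i - {j})) x y \<Longrightarrow> reach n ?S' x y" for x y
    using rtranclp_mono by (auto simp: reach_iff_rtranclp dest: predicate2D)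
  have "uadj n S x y \<Longrightarrow> reach n ?S' x y" for x y
  proof (cases "{x, y} = {i, j}")
    case True
    then show ?thesis
      using weaken[OF assms(3)] reach_sym by (auto simp: doubleton_eq_iff)
  next
    case False
    assume "uadj n S x y"
    with False have "uadj n (S(i := S i - {j})) x y"
      by (auto simp: uadj_def)
    then show ?thesis
      by (meson r_into_rtranclp reach_iff_rtranclp weaken)
  qed
  then have "(uadj n S)\<^sup>*\<^sup>* \<le> ((uadj n ?S')\<^sup>*\<^sup>*)\<^sup>*\<^sup>*"
    by (intro rtranclp_mono) (auto simp: reach_iff_rtranclp)
  then show "reach n S x y \<Longrightarrow> reach n ?S' x y"
    by (auto simp: reach_iff_rtranclp)
  show "reach n ?S' i w"
    using assms(1,2) by (auto simp: reach_iff_rtranclp uadj_def)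
qed

lemma valid_strategy_redirect:
  assumes "is_profile n b S" "i < n" "j \<in> S i" "w < n" "\<not> reach n S i w"
  shows "valid_strategy n b i (insert w (S i - {j}))"
proof -
  have Si: "S i \<subseteq> {0..<n} - {i}" "card (S i) = b i"
    using assms(1,2) by (auto simp: is_profile_def valid_strategy_def)
  have "w \<notin> S i" "w \<noteq> i"
    using assms(2,4,5) by (auto simp: reach_iff_rtranclp uadj_def)
  moreover have "finite (S i)"
    using Si(1) finite_subset by blast
  then have "card (insert w (S i - {j})) = card (S i)"
    using card_Suc_Diff1[OF _ assms(3)] \<open>w \<notin> S i\<close> by simp
  ultimately show ?thesis
    using Si assms(3,4) by (auto simp: valid_strategy_def)
qed

theorem mainTheorem13:
  fixes n :: nat and b :: "nat \<Rightarrow> nat" and S :: "nat \<Rightarrow> nat set"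
  assumes "\<forall>i<n. b i \<le> n - 1"
    and "(\<Sum>i<n. b i) \<ge> n - 1"
    and "nash_eq cost_max n b S \<or> nash_eq cost_sum n b S"
  shows "ug_connected n S"
proof (rule ccontr)
  \<comment> \<open>The budget bound of the first assumption is implied by the profile and not needed.\<close>
  assume disconnected: "\<not> ug_connected n S"
  have profile: "is_profile n b S"
    using assms(3) by (auto simp: nash_eq_def)
  obtain i j where ij: "i < n" "j \<in> S i" "reach n (S(i := S i - {j})) i j"
    using cycle_arc_exists[OF profile assms(2) disconnected] by blast
  obtain w where w: "w < n" "\<not> reach n S i w"
    using unreachable_exists[OF disconnected] by blast
  define S' where "S' = S(i := insert w (S i - {j}))"
  have valid: "valid_strategy n b i (insert w (S i - {j}))"
    using valid_strategy_redirect[OF profile ij(1,2) w] .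
  note redirect = reach_redirect[OF ij(1) w(1) ij(3), folded S'_def]
  have "cost_max n S' i < cost_max n S i" "cost_sum n S' i < cost_sum n S i"
    using cost_max_less[OF _ ij(1) w] cost_sum_less[OF _ ij(1) w] redirect by auto
  moreover have "c n S i \<le> c n S' i" if "nash_eq c n b S" for c
    using that ij(1) valid unfolding nash_eq_def S'_def by blast
  ultimately show False
    using assms(3) by (meson leD)
qed

end
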